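(* Let $\mathcal N$ and $\mathcal M$ be quantum channels satisfying $s$-detailed balance with respect to $\rho_\beta$, with $\mathcal N$ having $\rho_\beta$ as unique fixed state and spectrum in $[0,1]$. Run the single-trajectory algorithm with initial state $\rho_\beta$ and $T_{burn}=0$, and let $v=\mathbb E_{\rho_\beta}(\mathcal M)$. Then for all integers $t,p>0$ with $t+p\le K$, $$\mathbb E_{\rho_\beta}\big[(e_t-v)(e_{t+p}-v)\big]=\sum_{j\ge2}\alpha_{1j}\alpha_{j1}\lambda_j^{p-1}.$$
   Context: $H$ is an $n$-qubit Hermitian operator, $\beta>0$, $\rho_\beta=e^{-\beta H}/\operatorname{tr}(e^{-\beta H})$. $\mathcal T^\dagger$ is the Hilbert–Schmidt adjoint of a linear map (for a channel with Kraus $K_u$, $\mathcal T^\dagger(X)=\sum_uK_u^\dagger XK_u$). $\langle A,B\rangle_s=\operatorname{tr}(A^\dagger\rho_\beta^{1-s}B\rho_\beta^s)$; a map satisfies $s$-detailed balance if $\langle A,\mathcal T^\dagger(B)\rangle_s=\langle\mathcal T^\dagger(A),B\rangle_s$ for all $A,B$. $\mathcal M$ has Kraus operators $\{O_u\}_u$ indexed by finitely many real outcomes $u$. $\mathbb E_{\rho_\beta}(\mathcal M)=\sum_uu\operatorname{tr}(O_u\rho_\beta O_u^\dagger)$, $\widehat{\mathcal M}(X)=\sum_u(u-\mathbb E_{\rho_\beta}(\mathcal M))O_uXO_u^\dagger$, $\mathcal E=\mathcal M\circ\mathcal N\circ\mathcal M$, $\widehat{\mathcal E}=\mathcal M\circ\mathcal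 N\circ\widehat{\mathcal M}$. $\{Y_i\}_i$ is a $\langle\cdot,\cdot\rangle_s$-orthonormal basis of matrices with $\mathcal E^\dagger(Y_i)=\lambda_iY_i$, $1=\lambda_1>\lambda_2\ge\dots\ge0$, $Y_1=I$; $\alpha_{ij}=\langle Y_j,\widehat{\mathcal E}^\dagger(Y_i)\rangle_s$. Single-trajectory algorithm: starting from the given initial state, apply $\mathcal N$ $T_{burn}$ times, then for $t=1,\dots,K$ apply $\mathcal M$ (record outcome $e_t$), then $\mathcal N$, then $\mathcal M$ (outcome discarded). $\mathbb E_{\rho_\beta}$ is expectation over this process started from $\rho_\beta$. *)

theory Defs
  imports "HOL-Analysis.Analysis" "Jordan_Normal_Form.Matrix" "Jordan_Normal_Form.Conjugate"
begin

(* All matrices are d x d complex matrices, d = 2^n for an n-qubit system. *)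

definition adj :: "complex mat \<Rightarrow> complex mat" where
  "adj A = mat (dim_col A) (dim_row A) (\<lambda>(i,j). cnj (A $$ (j,i)))"

definition mtrace :: "complex mat \<Rightarrow> complex" where
  "mtrace A = (\<Sum>i<dim_row A. A $$ (i,i))"

definition mexp :: "complex mat \<Rightarrow> complex mat" where
  "mexp A = mat (dim_row A) (dim_col A)
     (\<lambda>(i,j). (\<Sum>k. (A ^\<^sub>m k) $$ (i,j) / of_nat (fact k)))"

definition partfun :: "complex mat \<Rightarrow> real \<Rightarrow> real" where
  "partfun H \<beta> = Re (mtrace (mexp ((- complex_of_real \<beta>) \<cdot>\<^sub>m H)))"

definition gibbs_pow :: "complex mat \<Rightarrow> real \<Rightarrow> real \<Rightarrow> complex mat" where
  "gibbs_pow H \<beta> r = complex_of_real (1 / (partfun H \<beta> powr r)) \<cdot>\<^sub>m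
      mexp ((- complex_of_real (r * \<beta>)) \<cdot>\<^sub>m H)"

definition gibbs :: "complex mat \<Rightarrow> real \<Rightarrow> complex mat" where
  "gibbs H \<beta> = (1 / mtrace (mexp ((- complex_of_real \<beta>) \<cdot>\<^sub>m H))) \<cdot>\<^sub>m
      mexp ((- complex_of_real \<beta>) \<cdot>\<^sub>m H)"

definition msum :: "nat \<Rightarrow> 'i set \<Rightarrow> ('i \<Rightarrow> complex mat) \<Rightarrow> complex mat" where
  "msum d I f = mat d d (\<lambda>(i,j). \<Sum>u\<in>I. f u $$ (i,j))"

definition kraus_map :: "nat \<Rightarrow> 'i set \<Rightarrow> ('i \<Rightarrow> complex mat) \<Rightarrow> complex mat \<Rightarrow> complex mat" where
  "kraus_map d I K X = msum d I (\<lambda>u. K u * X * adj (K u))"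

definition kraus_adj :: "nat \<Rightarrow> 'i set \<Rightarrow> ('i \<Rightarrow> complex mat) \<Rightarrow> complex mat \<Rightarrow> complex mat" where
  "kraus_adj d I K X = msum d I (\<lambda>u. adj (K u) * X * K u)"

definition is_channel :: "nat \<Rightarrow> 'i set \<Rightarrow> ('i \<Rightarrow> complex mat) \<Rightarrow> bool" where
  "is_channel d I K \<longleftrightarrow> finite I \<and> I \<noteq> {} \<and> (\<forall>u\<in>I. K u \<in> carrier_mat d d) \<and>
     msum d I (\<lambda>u. adj (K u) * K u) = 1\<^sub>m d"

definition s_inner :: "complex mat \<Rightarrow> real \<Rightarrow> real \<Rightarrow> complex mat \<Rightarrow> complex mat \<Rightarrow> complex" where
  "s_inner H \<beta> s A B = mtrace (adj A * gibbs_pow H \<beta> (1 - s) * B * gibbs_pow H \<beta> s)"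

definition s_detailed_balance ::
  "nat \<Rightarrow> complex mat \<Rightarrow> real \<Rightarrow> real \<Rightarrow> (complex mat \<Rightarrow> complex mat) \<Rightarrow> bool" where
  "s_detailed_balance d H \<beta> s Tadj \<longleftrightarrow>
     (\<forall>A\<in>carrier_mat d d. \<forall>B\<in>carrier_mat d d.
        s_inner H \<beta> s A (Tadj B) = s_inner H \<beta> s (Tadj A) B)"

definition is_density :: "nat \<Rightarrow> complex mat \<Rightarrow> bool" where
  "is_density d \<sigma> \<longleftrightarrow> \<sigma> \<in> carrier_mat d d \<and> adj \<sigma> = \<sigma> \<and> mtrace \<sigma> = 1 \<and>
     (\<forall>v\<in>carrier_vec d. 0 \<le> Re (conjugate v \<bullet> (\<sigma> *\<^sub>v v)))"

definition unique_fixed_state :: "nat \<Rightarrow> (complex mat \<Rightarrow> complex mat) \<Rightarrow> complex mat \<Rightarrow> bool" where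
  "unique_fixed_state d T \<rho> \<longleftrightarrow> T \<rho> = \<rho> \<and> (\<forall>\<sigma>. is_density d \<sigma> \<and> T \<sigma> = \<sigma> \<longrightarrow> \<sigma> = \<rho>)"

definition spectrum_in_01 :: "nat \<Rightarrow> (complex mat \<Rightarrow> complex mat) \<Rightarrow> bool" where
  "spectrum_in_01 d T \<longleftrightarrow> (\<forall>\<mu> X. X \<in> carrier_mat d d \<and> X \<noteq> 0\<^sub>m d d \<and> T X = \<mu> \<cdot>\<^sub>m X \<longrightarrow>
       \<mu> \<in> \<real> \<and> 0 \<le> Re \<mu> \<and> Re \<mu> \<le> 1)"

definition meas_expect :: "real set \<Rightarrow> (real \<Rightarrow> complex mat) \<Rightarrow> complex mat \<Rightarrow> complex" where
  "meas_expect U Ob \<rho> = (\<Sum>u\<in>U. complex_of_real u * mtrace (Ob u * \<rho> * adj (Ob u)))"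

definition hat_meas_adj :: "nat \<Rightarrow> real set \<Rightarrow> (real \<Rightarrow> complex mat) \<Rightarrow> complex \<Rightarrow> complex mat \<Rightarrow> complex mat" where
  "hat_meas_adj d U Ob v X = msum d U (\<lambda>u. (complex_of_real u - v) \<cdot>\<^sub>m (adj (Ob u) * X * Ob u))"

text \<open>One step of the single-trajectory algorithm with recorded outcome u of the first M:
  X |-> M(N(O_u X O_u^dag)).\<close>
definition traj_step :: "nat \<Rightarrow> real set \<Rightarrow> (real \<Rightarrow> complex mat) \<Rightarrow> 'k set \<Rightarrow> ('k \<Rightarrow> complex mat)
     \<Rightarrow> real \<Rightarrow> complex mat \<Rightarrow> complex mat" where
  "traj_step d U Ob IN KN u X = kraus_map d U Ob (kraus_map d IN KN (Ob u * X * adj (Ob u)))"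

text \<open>Unnormalised post-measurement state after rounds 1..t with outcomes e 1, ..., e t.\<close>
fun traj_state :: "nat \<Rightarrow> real set \<Rightarrow> (real \<Rightarrow> complex mat) \<Rightarrow> 'k set \<Rightarrow> ('k \<Rightarrow> complex mat)
     \<Rightarrow> complex mat \<Rightarrow> (nat \<Rightarrow> real) \<Rightarrow> nat \<Rightarrow> complex mat" where
  "traj_state d U Ob IN KN \<rho>0 e 0 = \<rho>0"
| "traj_state d U Ob IN KN \<rho>0 e (Suc t) = traj_step d U Ob IN KN (e (Suc t)) (traj_state d U Ob IN KN \<rho>0 e t)"

text \<open>Expectation of a function f of the recorded outcomes e 1, ..., e K of the
  single-trajectory algorithm with initial state rho0, Tburn applications of N, K rounds:
  sum over all outcome records of Prob(record) * f(record).\<close>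
definition traj_expect :: "nat \<Rightarrow> real set \<Rightarrow> (real \<Rightarrow> complex mat) \<Rightarrow> 'k set \<Rightarrow> ('k \<Rightarrow> complex mat)
     \<Rightarrow> complex mat \<Rightarrow> nat \<Rightarrow> nat \<Rightarrow> ((nat \<Rightarrow> real) \<Rightarrow> complex) \<Rightarrow> complex" where
  "traj_expect d U Ob IN KN \<rho>0 Tburn K f =
     (\<Sum>e\<in>PiE {1..K} (\<lambda>_. U).
        mtrace (traj_state d U Ob IN KN ((kraus_map d IN KN ^^ Tburn) \<rho>0) e K) * f e)"

end

theory Submission
  imports Defs "Jordan_Normal_Form.Determinant"
begin

(* Averaging over the recorded outcomes turns the trajectory into a composition of rounds in the
   Heisenberg picture: an unweighted round acts as E^dag = M^dag N^dag M^dag, while the rounds t and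
   t + p, weighted by e - v, act as the adjoint of hat E.  Since E^dag is unital and, by detailed
   balance, preserves the expectation tr(rho_beta X), the correlation equals
   tr(rho_beta hatE^dag (E^dag^(p-1) (hatE^dag I))).  Expanding in the <.,.>_s-orthonormal eigenbasis
   Y_j of E^dag gives the sum over j, and the j = 1 term vanishes because
   tr(rho_beta hatE^dag(I)) = E(M) - v = 0.  Besides the channel, detailed-balance and eigenbasis
   hypotheses nothing is used: the assumptions on beta, on the hermiticity of H, on the fixed state
   and spectrum of N and on the values of the lam_j are not needed. *)

section \<open>Sums and traces of square matrices\<close>

lemma index_mult_mat_sq:
  assumes "A \<in> carrier_mat d d" "B \<in> carrier_mat d d" "i < d" "j < d"
  shows "(A * B) $$ (i,j) = (\<Sum>l<d. A $$ (i,l) * B $$ (l,j))"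
  using assms by (auto simp: scalar_prod_def atLeast0LessThan intro!: sum.cong)

lemma assoc_mult_mat_sq:
  fixes A B C :: "'a :: semiring_0 mat"
  shows "A \<in> carrier_mat d d \<Longrightarrow> B \<in> carrier_mat d d \<Longrightarrow> C \<in> carrier_mat d d \<Longrightarrow>
    A * B * C = A * (B * C)"
  by (rule assoc_mult_mat[of A d d B d C d])

lemma smult_smult_mat: "a \<cdot>\<^sub>m (b \<cdot>\<^sub>m A) = (a * b) \<cdot>\<^sub>m (A :: 'a :: semigroup_mult mat)"
  by (rule eq_matI) (auto simp: mult.assoc)

lemma mult_carrier_mat_sq [simp]:
  "A \<in> carrier_mat d d \<Longrightarrow> B \<in> carrier_mat d d \<Longrightarrow> A * B \<in> carrier_mat d d"
  by auto

lemma smult_carrier_mat_sq [simp]: "A \<in> carrier_mat d d \<Longrightarrow> c \<cdot>\<^sub>m A \<in> carrier_mat d d"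
  by auto

lemma one_smult_mat: "1 \<cdot>\<^sub>m A = (A :: 'a :: monoid_mult mat)"
  by (rule eq_matI) auto

lemma adj_one_mat [simp]: "adj (1\<^sub>m d) = 1\<^sub>m d"
  by (rule eq_matI) (auto simp: adj_def)

lemma adj_carrier [simp]: "A \<in> carrier_mat d d \<Longrightarrow> adj A \<in> carrier_mat d d"
  by (auto simp: adj_def)

lemma msum_carrier [simp]: "msum d I f \<in> carrier_mat d d"
  and dim_row_msum [simp]: "dim_row (msum d I f) = d"
  and dim_col_msum [simp]: "dim_col (msum d I f) = d"
  by (auto simp: msum_def)

lemma index_msum [simp]: "i < d \<Longrightarrow> j < d \<Longrightarrow> msum d I f $$ (i,j) = (\<Sum>u\<in>I. f u $$ (i,j))"
  by (simp add: msum_def)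

lemma msum_cong: "(\<And>u. u \<in> I \<Longrightarrow> f u = g u) \<Longrightarrow> msum d I f = msum d I g"
  by (rule eq_matI) auto

lemma msum_swap: "msum d I (\<lambda>u. msum d J (g u)) = msum d J (\<lambda>j. msum d I (\<lambda>u. g u j))"
  by (rule eq_matI) (auto intro: sum.swap)

lemma smult_msum:
  assumes "\<And>u. u \<in> I \<Longrightarrow> f u \<in> carrier_mat d d"
  shows "c \<cdot>\<^sub>m msum d I f = msum d I (\<lambda>u. c \<cdot>\<^sub>m f u)"
proof -
  have "\<forall>u\<in>I. dim_row (f u) = d \<and> dim_col (f u) = d"
    using assms by auto
  then show ?thesis
    by (intro eq_matI) (auto simp: sum_distrib_left intro!: sum.cong)
qed

lemma mult_msum_right:
  assumes "B \<in> carrier_mat d d" "\<And>u. u \<in> I \<Longrightarrow> f u \<in> carrier_mat d d"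
  shows "msum d I f * B = msum d I (\<lambda>u. f u * B)"
proof (rule eq_matI)
  fix i j assume "i < dim_row (msum d I (\<lambda>u. f u * B))" "j < dim_col (msum d I (\<lambda>u. f u * B))"
  then have ij: "i < d" "j < d" by auto
  have "(msum d I f * B) $$ (i,j) = (\<Sum>l<d. (\<Sum>u\<in>I. f u $$ (i,l)) * B $$ (l,j))"
    using assms ij by (simp del: index_mult_mat add: index_mult_mat_sq[where d=d])
  also have "\<dots> = (\<Sum>u\<in>I. \<Sum>l<d. f u $$ (i,l) * B $$ (l,j))"
    by (simp add: sum_distrib_right) (rule sum.swap)
  also have "\<dots> = msum d I (\<lambda>u. f u * B) $$ (i,j)"
    using assms ij by (simp del: index_mult_mat add: index_mult_mat_sq[where d=d])
  finally show "(msum d I f * B) $$ (i,j) = msum d I (\<lambda>u. f u * B) $$ (i,j)" .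
qed (use assms in auto)

lemma mult_msum_left:
  assumes "A \<in> carrier_mat d d" "\<And>u. u \<in> I \<Longrightarrow> f u \<in> carrier_mat d d"
  shows "A * msum d I f = msum d I (\<lambda>u. A * f u)"
proof (rule eq_matI)
  fix i j assume "i < dim_row (msum d I (\<lambda>u. A * f u))" "j < dim_col (msum d I (\<lambda>u. A * f u))"
  then have ij: "i < d" "j < d" by auto
  have "(A * msum d I f) $$ (i,j) = (\<Sum>l<d. A $$ (i,l) * (\<Sum>u\<in>I. f u $$ (l,j)))"
    using assms ij by (simp del: index_mult_mat add: index_mult_mat_sq[where d=d])
  also have "\<dots> = (\<Sum>u\<in>I. \<Sum>l<d. A $$ (i,l) * f u $$ (l,j))"
    by (simp add: sum_distrib_left) (rule sum.swap)
  also have "\<dots> = msum d I (\<lambda>u. A * f u) $$ (i,j)"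
    using assms ij by (simp del: index_mult_mat add: index_mult_mat_sq[where d=d])
  finally show "(A * msum d I f) $$ (i,j) = msum d I (\<lambda>u. A * f u) $$ (i,j)" .
qed (use assms in auto)

lemma sandwich_msum:
  assumes "A \<in> carrier_mat d d" "B \<in> carrier_mat d d" "\<And>j. j \<in> J \<Longrightarrow> g j \<in> carrier_mat d d"
  shows "A * msum d J g * B = msum d J (\<lambda>j. A * g j * B)"
  using assms by (simp add: mult_msum_left mult_msum_right)

lemma sandwich_smult:
  fixes A X B :: "complex mat"
  assumes "A \<in> carrier_mat d d" "X \<in> carrier_mat d d" "B \<in> carrier_mat d d"
  shows "A * (c \<cdot>\<^sub>m X) * B = c \<cdot>\<^sub>m (A * X * B)"
  using assms by (simp add: mult_smult_distrib[of A d d X d] mult_smult_assoc_mat[of "A * X" d d B d])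

lemma mtrace_eq_sum: "A \<in> carrier_mat d d \<Longrightarrow> mtrace A = (\<Sum>i<d. A $$ (i,i))"
  by (simp add: mtrace_def)

lemma mtrace_mult_comm:
  assumes "A \<in> carrier_mat d d" "B \<in> carrier_mat d d"
  shows "mtrace (A * B) = mtrace (B * A)"
proof -
  have "mtrace (A * B) = (\<Sum>i<d. \<Sum>l<d. A $$ (i,l) * B $$ (l,i))"
    using assms by (simp del: index_mult_mat add: mtrace_eq_sum[of _ d] index_mult_mat_sq[where d=d])
  also have "\<dots> = (\<Sum>l<d. \<Sum>i<d. B $$ (l,i) * A $$ (i,l))"
    by (subst sum.swap) (simp add: mult.commute)
  also have "\<dots> = mtrace (B * A)"
    using assms by (simp del: index_mult_mat add: mtrace_eq_sum[of _ d] index_mult_mat_sq[where d=d])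
  finally show ?thesis .
qed

lemma mtrace_cycle:
  assumes "Q \<in> carrier_mat d d" "X \<in> carrier_mat d d" "C \<in> carrier_mat d d" "P \<in> carrier_mat d d"
  shows "mtrace (Q * X * P * C) = mtrace (X * (P * C * Q))"
proof -
  have "mtrace (Q * X * P * C) = mtrace (Q * (X * P * C))"
    using assms by (simp add: assoc_mult_mat_sq[of _ d])
  also have "\<dots> = mtrace (X * P * C * Q)"
    using assms by (intro mtrace_mult_comm) auto
  finally show ?thesis
    using assms by (simp add: assoc_mult_mat_sq[of _ d])
qed

lemma mtrace_msum:
  assumes "\<And>u. u \<in> I \<Longrightarrow> f u \<in> carrier_mat d d"
  shows "mtrace (msum d I f) = (\<Sum>u\<in>I. mtrace (f u))"
proof -
  have "mtrace (msum d I f) = (\<Sum>i<d. \<Sum>u\<in>I. f u $$ (i,i))"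
    by (simp add: mtrace_eq_sum[of _ d])
  also have "\<dots> = (\<Sum>u\<in>I. \<Sum>i<d. f u $$ (i,i))" by (rule sum.swap)
  also have "\<dots> = (\<Sum>u\<in>I. mtrace (f u))"
    using assms by (intro sum.cong) (auto simp: mtrace_eq_sum[of _ d])
  finally show ?thesis .
qed

lemma mtrace_smult: "A \<in> carrier_mat d d \<Longrightarrow> mtrace (c \<cdot>\<^sub>m A) = c * mtrace A"
  by (simp add: mtrace_eq_sum[of _ d] sum_distrib_left)

lemma mtrace_mult_msum_smult:
  assumes R: "R \<in> carrier_mat d d" and M: "\<And>j. j \<in> J \<Longrightarrow> M j \<in> carrier_mat d d"
  shows "mtrace (R * msum d J (\<lambda>j. c j \<cdot>\<^sub>m M j)) = (\<Sum>j\<in>J. c j * mtrace (R * M j))"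
proof -
  have "mtrace (R * msum d J (\<lambda>j. c j \<cdot>\<^sub>m M j)) = (\<Sum>j\<in>J. mtrace (R * (c j \<cdot>\<^sub>m M j)))"
    using assms by (simp add: mult_msum_left mtrace_msum[of _ _ d])
  also have "\<dots> = (\<Sum>j\<in>J. c j * mtrace (R * M j))"
    using assms by (intro sum.cong refl) (simp add: mult_smult_distrib[of R d d _ d] mtrace_smult[of _ d])
  finally show ?thesis .
qed

section \<open>The matrix exponential and powers of the Gibbs state\<close>

lemma pow_smult_mat:
  fixes A :: "complex mat"
  assumes "A \<in> carrier_mat d d"
  shows "(c \<cdot>\<^sub>m A) ^\<^sub>m k = c ^ k \<cdot>\<^sub>m (A ^\<^sub>m k)"
proof (induction k)
  case 0
  show ?case using assms by (intro eq_matI) auto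
next
  case (Suc k)
  have "(c \<cdot>\<^sub>m A) ^\<^sub>m Suc k = (c ^ k \<cdot>\<^sub>m (A ^\<^sub>m k)) * (c \<cdot>\<^sub>m A)"
    using Suc by simp
  also have "\<dots> = c ^ Suc k \<cdot>\<^sub>m (A ^\<^sub>m Suc k)"
    using assms by (intro eq_matI) (auto simp: scalar_prod_def sum_distrib_left algebra_simps intro!: sum.cong)
  finally show ?case .
qed

lemma pow_add_mat:
  assumes "A \<in> carrier_mat d d"
  shows "A ^\<^sub>m (m + k) = A ^\<^sub>m m * A ^\<^sub>m k"
proof (induction k)
  case (Suc k)
  then show ?case
    using assms by (simp add: assoc_mult_mat_sq[of _ d])
qed (use assms in simp)

definition mat_abs_sum :: "nat \<Rightarrow> complex mat \<Rightarrow> real" where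
  "mat_abs_sum d A = (\<Sum>i<d. \<Sum>j<d. cmod (A $$ (i,j)))"

lemma norm_index_pow_mat_le:
  assumes A: "A \<in> carrier_mat d d" and "i < d" "j < d"
  shows "cmod ((A ^\<^sub>m k) $$ (i,j)) \<le> mat_abs_sum d A ^ k"
  using assms(2,3)
proof (induction k arbitrary: i j)
  case 0
  then show ?case using A by (auto simp: mat_abs_sum_def)
next
  case (Suc k)
  have col_le: "(\<Sum>l<d. cmod (A $$ (l,j))) \<le> mat_abs_sum d A"
  proof -
    have "(\<Sum>l<d. cmod (A $$ (l,j))) \<le> (\<Sum>l<d. \<Sum>j'<d. cmod (A $$ (l,j')))"
      using Suc.prems by (intro sum_mono member_le_sum) auto
    then show ?thesis by (simp add: mat_abs_sum_def)
  qed
  have "(A ^\<^sub>m Suc k) $$ (i,j) = (\<Sum>l<d. (A ^\<^sub>m k) $$ (i,l) * A $$ (l,j))"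
    using A Suc.prems by (simp del: index_mult_mat add: index_mult_mat_sq[where d=d])
  then have "cmod ((A ^\<^sub>m Suc k) $$ (i,j)) \<le> (\<Sum>l<d. cmod ((A ^\<^sub>m k) $$ (i,l)) * cmod (A $$ (l,j)))"
    by (simp add: norm_mult[symmetric] norm_sum)
  also have "\<dots> \<le> (\<Sum>l<d. mat_abs_sum d A ^ k * cmod (A $$ (l,j)))"
    using Suc by (intro sum_mono mult_right_mono) auto
  also have "\<dots> \<le> mat_abs_sum d A ^ k * mat_abs_sum d A"
    using col_le by (simp add: sum_distrib_left[symmetric] mat_abs_sum_def mult_left_mono sum_nonneg)
  finally show ?case by (simp add: mult.commute)
qed

lemma summable_norm_exp_series_index:
  assumes "A \<in> carrier_mat d d" "i < d" "j < d"
  shows "summable (\<lambda>k. norm (a ^ k * (A ^\<^sub>m k) $$ (i,j) / fact k :: complex))"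
proof (rule summable_comparison_test)
  show "summable (\<lambda>k. inverse (fact k) * (cmod a * mat_abs_sum d A) ^ k)"
    by (rule summable_exp)
  have "norm (norm (a ^ k * (A ^\<^sub>m k) $$ (i,j) / fact k)) \<le> inverse (fact k) * (cmod a * mat_abs_sum d A) ^ k"
    for k
  proof -
    have "norm (norm (a ^ k * (A ^\<^sub>m k) $$ (i,j) / fact k)) = cmod a ^ k * cmod ((A ^\<^sub>m k) $$ (i,j)) / fact k"
      by (simp add: norm_mult norm_divide norm_power)
    also have "\<dots> \<le> cmod a ^ k * mat_abs_sum d A ^ k / fact k"
      using norm_index_pow_mat_le[OF assms] by (intro divide_right_mono mult_left_mono) auto
    finally show ?thesis
      by (simp add: power_mult_distrib divide_inverse mult_ac)
  qed
  then show "\<exists>N. \<forall>k\<ge>N. norm (norm (a ^ k * (A ^\<^sub>m k) $$ (i,j) / fact k)) \<le> inverse (fact k) * (cmod a * mat_abs_sum d A) ^ k"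
    by blast
qed

lemma mexp_carrier: "A \<in> carrier_mat d d \<Longrightarrow> mexp A \<in> carrier_mat d d"
  by (simp add: mexp_def)

lemma index_mexp_smult:
  assumes A: "A \<in> carrier_mat d d" and "i < d" "j < d"
  shows "mexp (a \<cdot>\<^sub>m A) $$ (i,j) = (\<Sum>k. a ^ k * (A ^\<^sub>m k) $$ (i,j) / fact k)"
proof -
  have "((a \<cdot>\<^sub>m A) ^\<^sub>m k) $$ (i,j) = a ^ k * (A ^\<^sub>m k) $$ (i,j)" for k
    unfolding pow_smult_mat[OF A] using assms by simp
  then show ?thesis
    using assms unfolding mexp_def by (simp only: index_mat dim_row_mat dim_col_mat of_nat_fact) simp
qed

lemma sum_binomial_fact:
  "(\<Sum>k\<le>n. a ^ k * b ^ (n - k) / (fact k * fact (n - k))) = (a + b) ^ n / (fact n :: complex)"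
proof -
  have "(a + b) ^ n / fact n = (\<Sum>k\<le>n. of_nat (n choose k) / fact n * (a ^ k * b ^ (n - k)))"
    by (simp add: binomial_ring sum_divide_distrib mult_ac)
  also have "\<dots> = (\<Sum>k\<le>n. a ^ k * b ^ (n - k) / (fact k * fact (n - k)))"
  proof (intro sum.cong refl)
    fix k assume "k \<in> {..n}"
    then have "of_nat (n choose k) / (fact n :: complex) = 1 / (fact k * fact (n - k))"
      by (simp add: binomial_fact)
    then show "of_nat (n choose k) / fact n * (a ^ k * b ^ (n - k)) = a ^ k * b ^ (n - k) / (fact k * fact (n - k))"
      by simp
  qed
  finally show ?thesis by simp
qed

lemma sum_exp_series_Cauchy_coeff:
  fixes A :: "complex mat" and a b :: complex
  assumes A: "A \<in> carrier_mat d d" and ij: "i < d" "j < d"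
  shows "(\<Sum>l<d. \<Sum>k\<le>n. a ^ k * (A ^\<^sub>m k) $$ (i,l) / fact k * (b ^ (n - k) * (A ^\<^sub>m (n - k)) $$ (l,j) / fact (n - k)))
    = (a + b) ^ n * (A ^\<^sub>m n) $$ (i,j) / fact n"
proof -
  have "(\<Sum>l<d. \<Sum>k\<le>n. a ^ k * (A ^\<^sub>m k) $$ (i,l) / fact k * (b ^ (n - k) * (A ^\<^sub>m (n - k)) $$ (l,j) / fact (n - k)))
      = (\<Sum>k\<le>n. a ^ k * b ^ (n - k) / (fact k * fact (n - k)) *
             (\<Sum>l<d. (A ^\<^sub>m k) $$ (i,l) * (A ^\<^sub>m (n - k)) $$ (l,j)))"
    by (subst sum.swap) (simp add: sum_distrib_left divide_inverse inverse_mult_distrib mult_ac)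
  also have "\<dots> = (\<Sum>k\<le>n. a ^ k * b ^ (n - k) / (fact k * fact (n - k)) * (A ^\<^sub>m n) $$ (i,j))"
  proof (intro sum.cong refl)
    fix k assume "k \<in> {..n}"
    then have "A ^\<^sub>m n = A ^\<^sub>m k * A ^\<^sub>m (n - k)"
      using pow_add_mat[OF A, of k "n - k"] by simp
    then show "a ^ k * b ^ (n - k) / (fact k * fact (n - k)) * (\<Sum>l<d. (A ^\<^sub>m k) $$ (i,l) * (A ^\<^sub>m (n - k)) $$ (l,j))
        = a ^ k * b ^ (n - k) / (fact k * fact (n - k)) * (A ^\<^sub>m n) $$ (i,j)"
      using A ij by (simp del: index_mult_mat add: index_mult_mat_sq[where d=d])
  qed
  also have "\<dots> = (\<Sum>k\<le>n. a ^ k * b ^ (n - k) / (fact k * fact (n - k))) * (A ^\<^sub>m n) $$ (i,j)"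
    by (rule sum_distrib_right[symmetric])
  also have "\<dots> = (a + b) ^ n * (A ^\<^sub>m n) $$ (i,j) / fact n"
    by (simp add: sum_binomial_fact)
  finally show ?thesis .
qed

lemma mexp_smult_add:
  assumes A: "A \<in> carrier_mat d d"
  shows "mexp (a \<cdot>\<^sub>m A) * mexp (b \<cdot>\<^sub>m A) = mexp ((a + b) \<cdot>\<^sub>m A)"
proof (rule eq_matI)
  fix i j assume "i < dim_row (mexp ((a + b) \<cdot>\<^sub>m A))" "j < dim_col (mexp ((a + b) \<cdot>\<^sub>m A))"
  then have ij: "i < d" "j < d" using A by (auto simp: mexp_def)
  define f where "f l k = a ^ k * (A ^\<^sub>m k) $$ (i,l) / fact k" for l k
  define g where "g l k = b ^ k * (A ^\<^sub>m k) $$ (l,j) / fact k" for l k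
  define c where "c l n = (\<Sum>k\<le>n. f l k * g l (n - k))" for l n
  have c_sums: "c l sums ((\<Sum>k. f l k) * (\<Sum>k. g l k))" if "l < d" for l
    unfolding c_def f_def g_def using that ij
    by (intro Cauchy_product_sums summable_norm_exp_series_index[OF A]) auto
  have c_sum: "(\<Sum>l<d. c l n) = (a + b) ^ n * (A ^\<^sub>m n) $$ (i,j) / fact n" for n
    unfolding c_def f_def g_def by (rule sum_exp_series_Cauchy_coeff[OF A ij])
  have "(mexp (a \<cdot>\<^sub>m A) * mexp (b \<cdot>\<^sub>m A)) $$ (i,j) = (\<Sum>l<d. (\<Sum>k. f l k) * (\<Sum>k. g l k))"
    using ij A by (simp del: index_mult_mat add: index_mult_mat_sq[where d=d] mexp_carrier index_mexp_smult[OF A] f_def g_def)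
  also have "\<dots> = (\<Sum>l<d. \<Sum>n. c l n)"
    using c_sums by (intro sum.cong refl) (simp add: sums_unique)
  also have "\<dots> = (\<Sum>n. \<Sum>l<d. c l n)"
    using c_sums sums_summable by (intro suminf_sum[symmetric]) blast
  also have "\<dots> = mexp ((a + b) \<cdot>\<^sub>m A) $$ (i,j)"
    by (simp add: c_sum index_mexp_smult[OF A ij])
  finally show "(mexp (a \<cdot>\<^sub>m A) * mexp (b \<cdot>\<^sub>m A)) $$ (i,j) = mexp ((a + b) \<cdot>\<^sub>m A) $$ (i,j)" .
qed (use A in \<open>auto simp: mexp_def\<close>)

lemma gibbs_pow_carrier: "H \<in> carrier_mat d d \<Longrightarrow> gibbs_pow H \<beta> r \<in> carrier_mat d d"
  by (simp add: gibbs_pow_def mexp_carrier)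

lemma gibbs_carrier: "H \<in> carrier_mat d d \<Longrightarrow> gibbs H \<beta> \<in> carrier_mat d d"
  by (simp add: gibbs_def mexp_carrier)

lemma gibbs_pow_mult:
  assumes H: "H \<in> carrier_mat d d"
  shows "gibbs_pow H \<beta> x * gibbs_pow H \<beta> y =
     complex_of_real (1 / partfun H \<beta> powr x * (1 / partfun H \<beta> powr y)) \<cdot>\<^sub>m
        mexp ((- complex_of_real ((x + y) * \<beta>)) \<cdot>\<^sub>m H)"
proof -
  let ?a = "- complex_of_real (x * \<beta>)" and ?b = "- complex_of_real (y * \<beta>)"
  have "gibbs_pow H \<beta> x * gibbs_pow H \<beta> y =
     complex_of_real (1 / partfun H \<beta> powr x * (1 / partfun H \<beta> powr y)) \<cdot>\<^sub>m
        (mexp (?a \<cdot>\<^sub>m H) * mexp (?b \<cdot>\<^sub>m H))"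
    using H unfolding gibbs_pow_def
    by (simp add: mexp_carrier mult_smult_distrib[of _ d d _ d] mult_smult_assoc_mat[of _ d d _ d]
        smult_smult_mat mult.commute)
  also have "mexp (?a \<cdot>\<^sub>m H) * mexp (?b \<cdot>\<^sub>m H) = mexp ((?a + ?b) \<cdot>\<^sub>m H)"
    by (rule mexp_smult_add[OF H])
  finally show ?thesis
    by (simp add: algebra_simps)
qed

(* The normalisation hypothesis pins down the scalar 1/tr(exp(-beta H)), so no positivity of the
   partition function (which would need the spectral theorem) is required. *)
lemma gibbs_pow_mult_complement:
  assumes H: "H \<in> carrier_mat d d"
    and norm: "mtrace (gibbs_pow H \<beta> (1 - s) * gibbs_pow H \<beta> s) = 1"
  shows "gibbs_pow H \<beta> s * gibbs_pow H \<beta> (1 - s) = gibbs H \<beta>"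
proof -
  define q where "q = complex_of_real (1 / partfun H \<beta> powr s * (1 / partfun H \<beta> powr (1 - s)))"
  define G where "G = mexp ((- complex_of_real \<beta>) \<cdot>\<^sub>m H)"
  have G: "G \<in> carrier_mat d d"
    using H by (simp add: G_def mexp_carrier)
  have "gibbs_pow H \<beta> s * gibbs_pow H \<beta> (1 - s) = q \<cdot>\<^sub>m G"
    using gibbs_pow_mult[OF H, of \<beta> s "1 - s"] by (simp add: q_def G_def)
  moreover have "gibbs_pow H \<beta> (1 - s) * gibbs_pow H \<beta> s = q \<cdot>\<^sub>m G"
    using gibbs_pow_mult[OF H, of \<beta> "1 - s" s] by (simp add: q_def G_def mult.commute)
  then have "q * mtrace G = 1"
    using norm mtrace_smult[OF G] by simp
  then have "q = 1 / mtrace G"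
    by (auto simp: eq_divide_eq)
  ultimately show ?thesis
    by (simp add: gibbs_def G_def)
qed

lemma mtrace_gibbs:
  assumes H: "H \<in> carrier_mat d d"
    and norm: "mtrace (gibbs_pow H \<beta> (1 - s) * gibbs_pow H \<beta> s) = 1"
  shows "mtrace (gibbs H \<beta>) = 1"
  using norm mtrace_mult_comm[OF gibbs_pow_carrier[OF H] gibbs_pow_carrier[OF H], of \<beta> s \<beta> "1 - s"]
  by (simp add: gibbs_pow_mult_complement[OF H norm])

lemma s_inner_one_left:
  assumes H: "H \<in> carrier_mat d d"
    and norm: "mtrace (gibbs_pow H \<beta> (1 - s) * gibbs_pow H \<beta> s) = 1"
    and X: "X \<in> carrier_mat d d"
  shows "s_inner H \<beta> s (1\<^sub>m d) X = mtrace (gibbs H \<beta> * X)"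
proof -
  let ?P = "gibbs_pow H \<beta> (1 - s)" and ?Q = "gibbs_pow H \<beta> s"
  have P: "?P \<in> carrier_mat d d" and Q: "?Q \<in> carrier_mat d d"
    using H by (auto intro: gibbs_pow_carrier)
  have "s_inner H \<beta> s (1\<^sub>m d) X = mtrace (?P * X * ?Q)"
    using P by (simp add: s_inner_def)
  also have "\<dots> = mtrace (?Q * (?P * X))"
    using P Q X by (intro mtrace_mult_comm) auto
  also have "\<dots> = mtrace (gibbs H \<beta> * X)"
    using P Q X by (simp add: assoc_mult_mat_sq[of _ d, symmetric] gibbs_pow_mult_complement[OF H norm])
  finally show ?thesis .
qed

lemma s_detailed_balance_mtrace_gibbs:
  assumes H: "H \<in> carrier_mat d d"
    and norm: "mtrace (gibbs_pow H \<beta> (1 - s) * gibbs_pow H \<beta> s) = 1"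
    and db: "s_detailed_balance d H \<beta> s T" and unital: "T (1\<^sub>m d) = 1\<^sub>m d"
    and X: "X \<in> carrier_mat d d" and TX: "T X \<in> carrier_mat d d"
  shows "mtrace (gibbs H \<beta> * T X) = mtrace (gibbs H \<beta> * X)"
proof -
  have "s_inner H \<beta> s (1\<^sub>m d) (T X) = s_inner H \<beta> s (T (1\<^sub>m d)) X"
    using db X unfolding s_detailed_balance_def by simp
  then show ?thesis
    using s_inner_one_left[OF H norm] X TX unital by simp
qed

section \<open>Kraus maps and their adjoints\<close>

lemma kraus_adj_carrier [simp]: "kraus_adj d I K X \<in> carrier_mat d d"
  by (simp add: kraus_adj_def)

lemma kraus_map_carrier [simp]: "kraus_map d I K X \<in> carrier_mat d d"
  by (simp add: kraus_map_def)

lemma kraus_adj_one_mat: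
  assumes "is_channel d I K"
  shows "kraus_adj d I K (1\<^sub>m d) = 1\<^sub>m d"
proof -
  have "kraus_adj d I K (1\<^sub>m d) = msum d I (\<lambda>u. adj (K u) * K u)"
    using assms unfolding kraus_adj_def is_channel_def
    by (intro msum_cong) (simp add: right_mult_one_mat[of _ d d])
  then show ?thesis
    using assms unfolding is_channel_def by simp
qed

definition weighted_kraus_adj ::
  "nat \<Rightarrow> 'i set \<Rightarrow> ('i \<Rightarrow> complex mat) \<Rightarrow> ('i \<Rightarrow> complex) \<Rightarrow> complex mat \<Rightarrow> complex mat" where
  "weighted_kraus_adj d I K w X = msum d I (\<lambda>u. w u \<cdot>\<^sub>m (adj (K u) * X * K u))"

lemma kraus_adj_eq_weighted: "kraus_adj d I K = weighted_kraus_adj d I K (\<lambda>_. 1)"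
  by (intro ext) (simp add: kraus_adj_def weighted_kraus_adj_def one_smult_mat)

lemma hat_meas_adj_eq_weighted:
  "hat_meas_adj d U Ob v = weighted_kraus_adj d U Ob (\<lambda>u. complex_of_real u - v)"
  by (intro ext) (simp add: hat_meas_adj_def weighted_kraus_adj_def)

definition linear_mat_map :: "nat \<Rightarrow> (complex mat \<Rightarrow> complex mat) \<Rightarrow> bool" where
  "linear_mat_map d L \<longleftrightarrow> (\<forall>X\<in>carrier_mat d d. L X \<in> carrier_mat d d) \<and>
     (\<forall>X\<in>carrier_mat d d. \<forall>c. L (c \<cdot>\<^sub>m X) = c \<cdot>\<^sub>m L X) \<and>
     (\<forall>(J :: nat set) g. (\<forall>j\<in>J. g j \<in> carrier_mat d d) \<longrightarrow> L (msum d J g) = msum d J (\<lambda>j. L (g j)))"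

lemma
  fixes J :: "nat set"
  assumes "linear_mat_map d L"
  shows linear_mat_map_carrier: "X \<in> carrier_mat d d \<Longrightarrow> L X \<in> carrier_mat d d"
    and linear_mat_map_smult: "X \<in> carrier_mat d d \<Longrightarrow> L (c \<cdot>\<^sub>m X) = c \<cdot>\<^sub>m L X"
    and linear_mat_map_msum:
      "(\<And>j. j \<in> J \<Longrightarrow> g j \<in> carrier_mat d d) \<Longrightarrow> L (msum d J g) = msum d J (\<lambda>j. L (g j))"
  using assms unfolding linear_mat_map_def by auto

lemma linear_mat_map_msum_smult:
  fixes J :: "nat set"
  assumes L: "linear_mat_map d L" and Y: "\<And>j. j \<in> J \<Longrightarrow> Y j \<in> carrier_mat d d"
  shows "L (msum d J (\<lambda>j. c j \<cdot>\<^sub>m Y j)) = msum d J (\<lambda>j. c j \<cdot>\<^sub>m L (Y j))"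
  using Y by (simp add: linear_mat_map_msum[OF L] linear_mat_map_smult[OF L] cong: msum_cong)

lemma linear_mat_map_comp:
  assumes L1: "linear_mat_map d L1" and L2: "linear_mat_map d L2"
  shows "linear_mat_map d (\<lambda>X. L1 (L2 X))"
  unfolding linear_mat_map_def
  by (simp add: linear_mat_map_carrier[OF L1] linear_mat_map_carrier[OF L2]
      linear_mat_map_smult[OF L1] linear_mat_map_smult[OF L2]
      linear_mat_map_msum[OF L1] linear_mat_map_msum[OF L2])

lemma linear_mat_map_weighted_kraus_adj:
  assumes K: "\<And>u. u \<in> I \<Longrightarrow> K u \<in> carrier_mat d d"
  shows "linear_mat_map d (weighted_kraus_adj d I K w)"
  unfolding linear_mat_map_def
proof (intro conjI ballI allI impI)
  fix X :: "complex mat" and c assume X: "X \<in> carrier_mat d d"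
  have "weighted_kraus_adj d I K w (c \<cdot>\<^sub>m X) = msum d I (\<lambda>u. c \<cdot>\<^sub>m (w u \<cdot>\<^sub>m (adj (K u) * X * K u)))"
    unfolding weighted_kraus_adj_def using K X
    by (intro msum_cong) (simp add: sandwich_smult[of _ d] smult_smult_mat mult.commute)
  also have "\<dots> = c \<cdot>\<^sub>m weighted_kraus_adj d I K w X"
    unfolding weighted_kraus_adj_def using K X by (intro smult_msum[symmetric]) auto
  finally show "weighted_kraus_adj d I K w (c \<cdot>\<^sub>m X) = c \<cdot>\<^sub>m weighted_kraus_adj d I K w X" .
next
  fix J :: "nat set" and g :: "nat \<Rightarrow> complex mat" assume g: "\<forall>j\<in>J. g j \<in> carrier_mat d d"
  have "weighted_kraus_adj d I K w (msum d J g)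
      = msum d I (\<lambda>u. msum d J (\<lambda>j. w u \<cdot>\<^sub>m (adj (K u) * g j * K u)))"
    unfolding weighted_kraus_adj_def using K g
    by (intro msum_cong) (simp add: sandwich_msum[of _ d] smult_msum)
  also have "\<dots> = msum d J (\<lambda>j. weighted_kraus_adj d I K w (g j))"
    unfolding weighted_kraus_adj_def by (rule msum_swap)
  finally show "weighted_kraus_adj d I K w (msum d J g) = msum d J (\<lambda>j. weighted_kraus_adj d I K w (g j))" .
qed (simp add: weighted_kraus_adj_def)

lemma linear_mat_map_funpow_eigen:
  fixes J :: "nat set"
  assumes L: "linear_mat_map d L"
    and Y: "\<And>j. j \<in> J \<Longrightarrow> Y j \<in> carrier_mat d d"
    and eig: "\<And>j. j \<in> J \<Longrightarrow> L (Y j) = lam j \<cdot>\<^sub>m Y j"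
  shows "(L ^^ m) (msum d J (\<lambda>j. c j \<cdot>\<^sub>m Y j)) = msum d J (\<lambda>j. (c j * lam j ^ m) \<cdot>\<^sub>m Y j)"
proof (induction m)
  case (Suc m)
  have "(L ^^ Suc m) (msum d J (\<lambda>j. c j \<cdot>\<^sub>m Y j)) = msum d J (\<lambda>j. (c j * lam j ^ m) \<cdot>\<^sub>m L (Y j))"
    using Suc Y by (simp add: linear_mat_map_msum_smult[OF L])
  also have "\<dots> = msum d J (\<lambda>j. (c j * lam j ^ Suc m) \<cdot>\<^sub>m Y j)"
    using eig by (intro msum_cong) (simp add: smult_smult_mat mult_ac)
  finally show ?case .
qed simp

lemma mtrace_kraus_map_mult:
  assumes K: "\<And>u. u \<in> I \<Longrightarrow> K u \<in> carrier_mat d d"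
    and X: "X \<in> carrier_mat d d" and B: "B \<in> carrier_mat d d"
  shows "mtrace (kraus_map d I K X * B) = mtrace (X * kraus_adj d I K B)"
proof -
  have "mtrace (kraus_map d I K X * B) = (\<Sum>u\<in>I. mtrace (K u * X * adj (K u) * B))"
    unfolding kraus_map_def using K X B by (simp add: mult_msum_right mtrace_msum[of _ _ d])
  also have "\<dots> = (\<Sum>u\<in>I. mtrace (X * (adj (K u) * B * K u)))"
    using K X B by (intro sum.cong refl mtrace_cycle) auto
  also have "\<dots> = mtrace (X * kraus_adj d I K B)"
    unfolding kraus_adj_def using K X B by (simp add: mult_msum_left mtrace_msum[of _ _ d])
  finally show ?thesis .
qed

lemma mtrace_hat_meas_adj_one:
  assumes ch: "is_channel d U Ob" and \<rho>: "\<rho> \<in> carrier_mat d d" "mtrace \<rho> = 1"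
  shows "mtrace (\<rho> * hat_meas_adj d U Ob (meas_expect U Ob \<rho>) (1\<^sub>m d)) = 0"
proof -
  have Ob: "\<And>u. u \<in> U \<Longrightarrow> Ob u \<in> carrier_mat d d"
    using ch unfolding is_channel_def by auto
  define prob where "prob u = mtrace (\<rho> * (adj (Ob u) * Ob u))" for u
  have "mtrace (Ob u * \<rho> * adj (Ob u)) = prob u" if u: "u \<in> U" for u
    unfolding prob_def using Ob[OF u] \<rho>
    by (simp add: mtrace_mult_comm[of "Ob u * \<rho>" d "adj (Ob u)"] assoc_mult_mat_sq[of _ d]
        mtrace_mult_comm[of "Ob u" d])
  then have expect: "meas_expect U Ob \<rho> = (\<Sum>u\<in>U. complex_of_real u * prob u)"
    unfolding meas_expect_def by simp
  have "(\<Sum>u\<in>U. prob u) = mtrace (\<rho> * msum d U (\<lambda>u. adj (Ob u) * Ob u))"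
    unfolding prob_def using Ob \<rho> by (simp add: mult_msum_left mtrace_msum[of _ _ d])
  also have "\<dots> = 1"
    using ch \<rho> unfolding is_channel_def by simp
  finally have total: "(\<Sum>u\<in>U. prob u) = 1" .
  have "mtrace (\<rho> * hat_meas_adj d U Ob (meas_expect U Ob \<rho>) (1\<^sub>m d))
      = (\<Sum>u\<in>U. (complex_of_real u - meas_expect U Ob \<rho>) * prob u)"
    unfolding hat_meas_adj_def prob_def using Ob \<rho>
    by (simp add: mtrace_mult_msum_smult[of _ d] right_mult_one_mat[of _ d d])
  also have "\<dots> = (\<Sum>u\<in>U. complex_of_real u * prob u) - meas_expect U Ob \<rho> * (\<Sum>u\<in>U. prob u)"
    by (simp add: algebra_simps sum_subtractf sum_distrib_right)
  also have "\<dots> = 0"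
    using expect total by simp
  finally show ?thesis .
qed

section \<open>Trajectories in the Heisenberg picture\<close>

(* One round of the trajectory in the Heisenberg picture, the recorded outcome u weighted by w u:
   weights 1 give E^dag = M^dag N^dag M^dag, weights u - v give the adjoint of hat E = M N hat M. *)
definition round_adj :: "nat \<Rightarrow> real set \<Rightarrow> (real \<Rightarrow> complex mat) \<Rightarrow> 'k set \<Rightarrow> ('k \<Rightarrow> complex mat)
    \<Rightarrow> (real \<Rightarrow> complex) \<Rightarrow> complex mat \<Rightarrow> complex mat" where
  "round_adj d U Ob IN KN w B = weighted_kraus_adj d U Ob w (kraus_adj d IN KN (kraus_adj d U Ob B))"

fun rounds_adj :: "nat \<Rightarrow> real set \<Rightarrow> (real \<Rightarrow> complex mat) \<Rightarrow> 'k set \<Rightarrow> ('k \<Rightarrow> complex mat)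
    \<Rightarrow> (nat \<Rightarrow> real \<Rightarrow> complex) \<Rightarrow> nat \<Rightarrow> complex mat \<Rightarrow> complex mat" where
  "rounds_adj d U Ob IN KN w 0 B = B"
| "rounds_adj d U Ob IN KN w (Suc k) B =
     rounds_adj d U Ob IN KN w k (round_adj d U Ob IN KN (w (Suc k)) B)"

lemma round_adj_carrier [simp]: "round_adj d U Ob IN KN w B \<in> carrier_mat d d"
  by (simp add: round_adj_def weighted_kraus_adj_def)

lemma round_adj_one_weight:
  "round_adj d U Ob IN KN (\<lambda>_. 1) = (\<lambda>X. kraus_adj d U Ob (kraus_adj d IN KN (kraus_adj d U Ob X)))"
  by (intro ext) (simp add: round_adj_def kraus_adj_eq_weighted)

lemma round_adj_centered_weight:
  "round_adj d U Ob IN KN (\<lambda>u. complex_of_real u - v) =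
     (\<lambda>X. hat_meas_adj d U Ob v (kraus_adj d IN KN (kraus_adj d U Ob X)))"
  by (intro ext) (simp add: round_adj_def hat_meas_adj_eq_weighted)

lemma linear_mat_map_round_adj:
  assumes "\<And>u. u \<in> U \<Longrightarrow> Ob u \<in> carrier_mat d d" "\<And>k. k \<in> IN \<Longrightarrow> KN k \<in> carrier_mat d d"
  shows "linear_mat_map d (round_adj d U Ob IN KN w)"
proof -
  have M: "linear_mat_map d (weighted_kraus_adj d U Ob w')" for w'
    using assms(1) by (rule linear_mat_map_weighted_kraus_adj)
  have N: "linear_mat_map d (kraus_adj d IN KN)"
    unfolding kraus_adj_eq_weighted using assms(2) by (rule linear_mat_map_weighted_kraus_adj)
  show ?thesis
    using linear_mat_map_comp[OF M linear_mat_map_comp[OF N M[of "\<lambda>_. 1"]]]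
    unfolding round_adj_def[abs_def] kraus_adj_eq_weighted .
qed

lemma round_adj_one_weight_one_mat:
  assumes "is_channel d U Ob" "is_channel d IN KN"
  shows "round_adj d U Ob IN KN (\<lambda>_. 1) (1\<^sub>m d) = 1\<^sub>m d"
  using assms by (simp add: round_adj_one_weight kraus_adj_one_mat)

lemma mtrace_gibbs_round_adj_one_weight:
  assumes H: "H \<in> carrier_mat d d"
    and norm: "mtrace (gibbs_pow H \<beta> (1 - s) * gibbs_pow H \<beta> s) = 1"
    and chM: "is_channel d U Ob" and chN: "is_channel d IN KN"
    and dbM: "s_detailed_balance d H \<beta> s (kraus_adj d U Ob)"
    and dbN: "s_detailed_balance d H \<beta> s (kraus_adj d IN KN)"
    and X: "X \<in> carrier_mat d d"
  shows "mtrace (gibbs H \<beta> * round_adj d U Ob IN KN (\<lambda>_. 1) X) = mtrace (gibbs H \<beta> * X)"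
  using X s_detailed_balance_mtrace_gibbs[OF H norm dbM kraus_adj_one_mat[OF chM]]
    s_detailed_balance_mtrace_gibbs[OF H norm dbN kraus_adj_one_mat[OF chN]]
  by (simp add: round_adj_one_weight)

lemma s_inner_one_round_adj_centered_one:
  assumes H: "H \<in> carrier_mat d d"
    and norm: "mtrace (gibbs_pow H \<beta> (1 - s) * gibbs_pow H \<beta> s) = 1"
    and chM: "is_channel d U Ob" and chN: "is_channel d IN KN"
  shows "s_inner H \<beta> s (1\<^sub>m d)
    (round_adj d U Ob IN KN (\<lambda>u. complex_of_real u - meas_expect U Ob (gibbs H \<beta>)) (1\<^sub>m d)) = 0"
proof -
  have "s_inner H \<beta> s (1\<^sub>m d)
      (round_adj d U Ob IN KN (\<lambda>u. complex_of_real u - meas_expect U Ob (gibbs H \<beta>)) (1\<^sub>m d)) =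
    mtrace (gibbs H \<beta> * round_adj d U Ob IN KN (\<lambda>u. complex_of_real u - meas_expect U Ob (gibbs H \<beta>)) (1\<^sub>m d))"
    by (rule s_inner_one_left[OF H norm round_adj_carrier])
  also have "\<dots> = mtrace (gibbs H \<beta> * hat_meas_adj d U Ob (meas_expect U Ob (gibbs H \<beta>)) (1\<^sub>m d))"
    using chM chN by (simp add: round_adj_centered_weight kraus_adj_one_mat)
  also have "\<dots> = 0"
    by (rule mtrace_hat_meas_adj_one[OF chM gibbs_carrier[OF H] mtrace_gibbs[OF H norm]])
  finally show ?thesis .
qed

lemma traj_state_carrier:
  "\<rho>0 \<in> carrier_mat d d \<Longrightarrow> traj_state d U Ob IN KN \<rho>0 e k \<in> carrier_mat d d"
  by (cases k) (auto simp: traj_step_def kraus_map_def)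

lemma traj_state_cong:
  "(\<And>i. 1 \<le> i \<Longrightarrow> i \<le> k \<Longrightarrow> e i = e' i) \<Longrightarrow>
    traj_state d U Ob IN KN \<rho>0 e k = traj_state d U Ob IN KN \<rho>0 e' k"
  by (induction k) auto

lemma rounds_adj_pred:
  "0 < n \<Longrightarrow> rounds_adj d U Ob IN KN w n B = rounds_adj d U Ob IN KN w (n - 1) (round_adj d U Ob IN KN (w n) B)"
  by (cases n) auto

lemma rounds_adj_unweighted:
  assumes "m \<le> n" and "\<And>i. m < i \<Longrightarrow> i \<le> n \<Longrightarrow> w i = (\<lambda>_. 1)"
  shows "rounds_adj d U Ob IN KN w n B =
    rounds_adj d U Ob IN KN w m ((round_adj d U Ob IN KN (\<lambda>_. 1) ^^ (n - m)) B)"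
  using assms
proof (induction n arbitrary: B)
  case (Suc n)
  show ?case
  proof (cases "m = Suc n")
    case False
    then have "rounds_adj d U Ob IN KN w (Suc n) B =
        rounds_adj d U Ob IN KN w m ((round_adj d U Ob IN KN (\<lambda>_. 1) ^^ (n - m))
          (round_adj d U Ob IN KN (\<lambda>_. 1) B))"
      using Suc by simp
    then show ?thesis
      using False Suc.prems(1) by (simp add: Suc_diff_le funpow_swap1)
  qed simp
qed simp

lemma rounds_adj_two_point:
  assumes w: "\<And>i. i \<noteq> t \<Longrightarrow> i \<noteq> t + p \<Longrightarrow> w i = (\<lambda>_. 1)" "w t = f" "w (t + p) = f"
    and unital: "round_adj d U Ob IN KN (\<lambda>_. 1) (1\<^sub>m d) = 1\<^sub>m d"
    and tp: "0 < t" "0 < p" "t + p \<le> K"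
  shows "rounds_adj d U Ob IN KN w K (1\<^sub>m d) =
    (round_adj d U Ob IN KN (\<lambda>_. 1) ^^ (t - 1)) (round_adj d U Ob IN KN f
      ((round_adj d U Ob IN KN (\<lambda>_. 1) ^^ (p - 1)) (round_adj d U Ob IN KN f (1\<^sub>m d))))"
proof -
  let ?E = "round_adj d U Ob IN KN (\<lambda>_. 1)" and ?F = "round_adj d U Ob IN KN f"
  have E_pow_one: "(?E ^^ k) (1\<^sub>m d) = 1\<^sub>m d" for k
    by (induction k) (simp_all add: unital)
  have "rounds_adj d U Ob IN KN w K (1\<^sub>m d) =
      rounds_adj d U Ob IN KN w (t + p) ((?E ^^ (K - (t + p))) (1\<^sub>m d))"
    using tp w by (intro rounds_adj_unweighted) auto
  also have "\<dots> = rounds_adj d U Ob IN KN w (t + p - 1) (?F (1\<^sub>m d))"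
    using tp w by (simp add: E_pow_one rounds_adj_pred[where n = "t + p"])
  also have "\<dots> = rounds_adj d U Ob IN KN w t ((?E ^^ (p - 1)) (?F (1\<^sub>m d)))"
    using tp w by (subst rounds_adj_unweighted[of t]) auto
  also have "\<dots> = rounds_adj d U Ob IN KN w (t - 1) (?F ((?E ^^ (p - 1)) (?F (1\<^sub>m d))))"
    using tp w by (simp add: rounds_adj_pred[where n = t])
  also have "\<dots> = (?E ^^ (t - 1)) (?F ((?E ^^ (p - 1)) (?F (1\<^sub>m d))))"
    using tp w by (subst rounds_adj_unweighted[of 0]) auto
  finally show ?thesis .
qed

lemma mtrace_funpow_invariant:
  assumes T: "\<And>X. X \<in> carrier_mat d d \<Longrightarrow> T X \<in> carrier_mat d d"
    and invariant: "\<And>X. X \<in> carrier_mat d d \<Longrightarrow> mtrace (\<rho> * T X) = mtrace (\<rho> * X)"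
    and X: "X \<in> carrier_mat d d"
  shows "mtrace (\<rho> * (T ^^ k) X) = mtrace (\<rho> * X)"
proof -
  have "(T ^^ k) X \<in> carrier_mat d d \<and> mtrace (\<rho> * (T ^^ k) X) = mtrace (\<rho> * X)"
    by (induction k) (simp_all add: X T invariant)
  then show ?thesis ..
qed

context
  fixes d :: nat and U :: "real set" and Ob :: "real \<Rightarrow> complex mat"
    and IN :: "'k set" and KN :: "'k \<Rightarrow> complex mat"
  assumes Ob: "\<And>u. u \<in> U \<Longrightarrow> Ob u \<in> carrier_mat d d"
    and KN: "\<And>k. k \<in> IN \<Longrightarrow> KN k \<in> carrier_mat d d"
begin

lemma sum_mtrace_traj_step_weighted:
  assumes X: "X \<in> carrier_mat d d" and B: "B \<in> carrier_mat d d"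
  shows "(\<Sum>u\<in>U. w u * mtrace (traj_step d U Ob IN KN u X * B)) = mtrace (X * round_adj d U Ob IN KN w B)"
proof -
  let ?B' = "kraus_adj d IN KN (kraus_adj d U Ob B)"
  have "mtrace (traj_step d U Ob IN KN u X * B) = mtrace (X * (adj (Ob u) * ?B' * Ob u))" if u: "u \<in> U" for u
  proof -
    have "mtrace (traj_step d U Ob IN KN u X * B) =
        mtrace (kraus_map d IN KN (Ob u * X * adj (Ob u)) * kraus_adj d U Ob B)"
      unfolding traj_step_def using B by (intro mtrace_kraus_map_mult[OF Ob]) auto
    also have "\<dots> = mtrace (Ob u * X * adj (Ob u) * ?B')"
      using Ob[OF u] X by (intro mtrace_kraus_map_mult[OF KN]) auto
    also have "\<dots> = mtrace (X * (adj (Ob u) * ?B' * Ob u))"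
      using Ob[OF u] X by (intro mtrace_cycle) auto
    finally show ?thesis .
  qed
  then show ?thesis
    unfolding round_adj_def weighted_kraus_adj_def using Ob X
    by (simp add: mult_msum_left mtrace_msum[of _ _ d] mult_smult_distrib[of X d d _ d] mtrace_smult[of _ d])
qed

lemma sum_traj_state_weighted:
  assumes \<rho>0: "\<rho>0 \<in> carrier_mat d d" and B: "B \<in> carrier_mat d d"
  shows "(\<Sum>e\<in>PiE {1..k} (\<lambda>_. U). (\<Prod>i\<in>{1..k}. w i (e i)) * mtrace (traj_state d U Ob IN KN \<rho>0 e k * B))
       = mtrace (\<rho>0 * rounds_adj d U Ob IN KN w k B)"
  using B
proof (induction k arbitrary: B)
  case (Suc k)
  define S where "S = {1..k}"
  define x where "x = Suc k"
  define state where "state g = traj_state d U Ob IN KN \<rho>0 g k" for g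
  have ins: "{1..Suc k} = insert x S" and xS: "x \<notin> S"
    unfolding S_def x_def by auto
  have state: "state g \<in> carrier_mat d d" for g
    unfolding state_def by (rule traj_state_carrier[OF \<rho>0])
  define F where "F e = (\<Prod>i\<in>{1..Suc k}. w i (e i)) * mtrace (traj_state d U Ob IN KN \<rho>0 e (Suc k) * B)" for e
  have update: "F (g(x := y)) = (\<Prod>i\<in>S. w i (g i)) * (w x y * mtrace (traj_step d U Ob IN KN y (state g) * B))"
    for g y
  proof -
    have "(\<Prod>i\<in>S. w i ((g(x := y)) i)) = (\<Prod>i\<in>S. w i (g i))"
      using xS by (intro prod.cong) auto
    moreover have "traj_state d U Ob IN KN \<rho>0 (g(x := y)) k = state g"
      unfolding state_def by (rule traj_state_cong) (auto simp: x_def)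
    ultimately show ?thesis
      unfolding F_def ins using xS by (simp add: S_def x_def)
  qed
  have "(\<Sum>e\<in>PiE {1..Suc k} (\<lambda>_. U). F e) = (\<Sum>(y, g)\<in>U \<times> PiE S (\<lambda>_. U). F (g(x := y)))"
    unfolding ins using xS
    by (intro sum.reindex_bij_witness[of _ "\<lambda>(y, g). g(x := y)" "\<lambda>g. (g x, g(x := undefined))"])
      (auto simp: PiE_def extensional_def)
  also have "\<dots> = (\<Sum>(y, g)\<in>U \<times> PiE S (\<lambda>_. U). (\<Prod>i\<in>S. w i (g i)) * (w x y * mtrace (traj_step d U Ob IN KN y (state g) * B)))"
    by (simp add: update)
  also have "\<dots> = (\<Sum>g\<in>PiE S (\<lambda>_. U). \<Sum>y\<in>U. (\<Prod>i\<in>S. w i (g i)) * (w x y * mtrace (traj_step d U Ob IN KN y (state g) * B)))"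
    by (simp only: sum.cartesian_product[symmetric]) (rule sum.swap)
  also have "\<dots> = (\<Sum>g\<in>PiE S (\<lambda>_. U). (\<Prod>i\<in>S. w i (g i)) * mtrace (state g * round_adj d U Ob IN KN (w x) B))"
    by (simp add: sum_distrib_left[symmetric] sum_mtrace_traj_step_weighted[OF state Suc.prems])
  also have "\<dots> = mtrace (\<rho>0 * rounds_adj d U Ob IN KN w (Suc k) B)"
    using Suc.IH[OF round_adj_carrier] unfolding S_def state_def x_def by simp
  finally show ?case
    unfolding F_def .
qed simp

lemma traj_expect_two_point:
  assumes \<rho>: "\<rho> \<in> carrier_mat d d"
    and unital: "round_adj d U Ob IN KN (\<lambda>_. 1) (1\<^sub>m d) = 1\<^sub>m d"
    and invariant: "\<And>X. X \<in> carrier_mat d d \<Longrightarrow>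
      mtrace (\<rho> * round_adj d U Ob IN KN (\<lambda>_. 1) X) = mtrace (\<rho> * X)"
    and tp: "0 < t" "0 < p" "t + p \<le> K"
  shows "traj_expect d U Ob IN KN \<rho> 0 K
      (\<lambda>e. (complex_of_real (e t) - v) * (complex_of_real (e (t + p)) - v)) =
    mtrace (\<rho> * round_adj d U Ob IN KN (\<lambda>u. complex_of_real u - v)
      ((round_adj d U Ob IN KN (\<lambda>_. 1) ^^ (p - 1))
        (round_adj d U Ob IN KN (\<lambda>u. complex_of_real u - v) (1\<^sub>m d))))"
proof -
  let ?E = "round_adj d U Ob IN KN (\<lambda>_. 1)" and ?F = "round_adj d U Ob IN KN (\<lambda>u. complex_of_real u - v)"
  define w :: "nat \<Rightarrow> real \<Rightarrow> complex" where
    "w k u = (if k = t \<or> k = t + p then complex_of_real u - v else 1)" for k u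
  have weights: "(complex_of_real (e t) - v) * (complex_of_real (e (t + p)) - v) = (\<Prod>i\<in>{1..K}. w i (e i))"
    for e
  proof -
    have "(\<Prod>i\<in>{1..K}. w i (e i)) = (\<Prod>i\<in>{t, t + p}. w i (e i))"
      using tp by (intro prod.mono_neutral_right) (auto simp: w_def)
    then show ?thesis
      using tp by (simp add: w_def)
  qed
  have "traj_expect d U Ob IN KN \<rho> 0 K
      (\<lambda>e. (complex_of_real (e t) - v) * (complex_of_real (e (t + p)) - v)) =
    (\<Sum>e\<in>PiE {1..K} (\<lambda>_. U). (\<Prod>i\<in>{1..K}. w i (e i)) * mtrace (traj_state d U Ob IN KN \<rho> e K * 1\<^sub>m d))"
    unfolding traj_expect_def weights using \<rho>
    by (simp add: traj_state_carrier mult.commute right_mult_one_mat[of _ d d])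
  also have "\<dots> = mtrace (\<rho> * rounds_adj d U Ob IN KN w K (1\<^sub>m d))"
    by (rule sum_traj_state_weighted[OF \<rho>]) simp
  also have "rounds_adj d U Ob IN KN w K (1\<^sub>m d) = (?E ^^ (t - 1)) (?F ((?E ^^ (p - 1)) (?F (1\<^sub>m d))))"
    using tp unital by (intro rounds_adj_two_point) (auto simp: w_def)
  also have "mtrace (\<rho> * (?E ^^ (t - 1)) (?F ((?E ^^ (p - 1)) (?F (1\<^sub>m d))))) =
      mtrace (\<rho> * ?F ((?E ^^ (p - 1)) (?F (1\<^sub>m d))))"
    by (rule mtrace_funpow_invariant[where d = d]) (simp_all add: invariant)
  finally show ?thesis .
qed
end

section \<open>Expansion in an orthonormal eigenbasis\<close>

lemma mult_add_div_mod_less: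
  fixes a b d :: nat
  assumes "a < d" "b < d"
  shows "a * d + b < d * d" and "(a * d + b) div d = a" and "(a * d + b) mod d = b"
proof -
  have "a * d + b < (a + 1) * d" using assms by simp
  also have "\<dots> \<le> d * d" using assms by (intro mult_right_mono) auto
  finally show "a * d + b < d * d" .
qed (use assms in auto)

lemma sum_lessThan_mult_div_mod:
  fixes f :: "nat \<Rightarrow> nat \<Rightarrow> 'a :: comm_monoid_add"
  shows "(\<Sum>k<d * d. f (k div d) (k mod d)) = (\<Sum>b<d. \<Sum>a<d. f b a)"
proof -
  have "(\<Sum>k<d * d. f (k div d) (k mod d)) = (\<Sum>(b, a)\<in>{..<d} \<times> {..<d}. f b a)"
  proof (rule sum.reindex_bij_witness[of _ "\<lambda>(b, a). b * d + a" "\<lambda>k. (k div d, k mod d)"])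
    fix k assume k: "k \<in> {..<d * d}"
    then have "0 < d" by (cases d) auto
    then show "(k div d, k mod d) \<in> {..<d} \<times> {..<d}"
      using k by (auto simp: less_mult_imp_div_less)
  qed (auto simp: mult_add_div_mod_less)
  also have "\<dots> = (\<Sum>b<d. \<Sum>a<d. f b a)"
    by (rule sum.cartesian_product[symmetric])
  finally show ?thesis .
qed

lemma mtrace_mult_eq_sum_div_mod:
  assumes "W \<in> carrier_mat d d" "Z \<in> carrier_mat d d"
  shows "mtrace (W * Z) = (\<Sum>k<d * d. W $$ (k mod d, k div d) * Z $$ (k div d, k mod d))"
proof -
  have "mtrace (W * Z) = (\<Sum>a<d. \<Sum>b<d. W $$ (a, b) * Z $$ (b, a))"
    using assms by (simp del: index_mult_mat add: mtrace_eq_sum[of _ d] index_mult_mat_sq[where d=d])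
  also have "\<dots> = (\<Sum>b<d. \<Sum>a<d. W $$ (a, b) * Z $$ (b, a))"
    by (rule sum.swap)
  finally show ?thesis
    by (simp add: sum_lessThan_mult_div_mod[where f = "\<lambda>b a. W $$ (a, b) * Z $$ (b, a)"])
qed

(* Orthonormality makes the coefficient matrix E a left inverse of the matrix F whose columns are
   the vectorised Y j; being square, it is also a right inverse, which is completeness. *)
lemma orthonormal_expansion:
  fixes Y :: "nat \<Rightarrow> complex mat"
  assumes P: "P \<in> carrier_mat d d" and Q: "Q \<in> carrier_mat d d"
    and Y: "\<And>i. i \<in> {1..d^2} \<Longrightarrow> Y i \<in> carrier_mat d d"
    and orth: "\<And>i j. i \<in> {1..d^2} \<Longrightarrow> j \<in> {1..d^2} \<Longrightarrow>
      mtrace (adj (Y i) * P * Y j * Q) = (if i = j then 1 else 0)"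
    and X: "X \<in> carrier_mat d d"
  shows "X = msum d {1..d^2} (\<lambda>j. mtrace (adj (Y j) * P * X * Q) \<cdot>\<^sub>m Y j)"
proof -
  define N where "N = d * d"
  have Suc_in: "Suc j \<in> {1..d^2}" if "j < N" for j
    using that by (simp add: N_def power2_eq_square)
  define vec_of :: "complex mat \<Rightarrow> complex Matrix.vec" where
    "vec_of Z = Matrix.vec N (\<lambda>k. Z $$ (k div d, k mod d))" for Z
  define E where "E = mat N N (\<lambda>(i, k). (Q * adj (Y (Suc i)) * P) $$ (k mod d, k div d))"
  define F where "F = mat N N (\<lambda>(k, j). Y (Suc j) $$ (k div d, k mod d))"
  have E: "E \<in> carrier_mat N N" and F: "F \<in> carrier_mat N N"
    unfolding E_def F_def by auto
  have coeff: "vec_index (E *\<^sub>v vec_of Z) i = mtrace (adj (Y (Suc i)) * P * Z * Q)"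
    if i: "i < N" and Z: "Z \<in> carrier_mat d d" for i Z
  proof -
    have Yi: "adj (Y (Suc i)) \<in> carrier_mat d d"
      using Y[OF Suc_in[OF i]] by simp
    have "vec_index (E *\<^sub>v vec_of Z) i = (\<Sum>k<N. (Q * adj (Y (Suc i)) * P) $$ (k mod d, k div d) * Z $$ (k div d, k mod d))"
      using i by (simp add: E_def vec_of_def scalar_prod_def atLeast0LessThan)
    also have "\<dots> = mtrace (Q * adj (Y (Suc i)) * P * Z)"
      unfolding N_def using P Q Z Yi by (intro mtrace_mult_eq_sum_div_mod[symmetric]) auto
    also have "\<dots> = mtrace (adj (Y (Suc i)) * P * Z * Q)"
      using mtrace_cycle[OF Q Yi Z P] P Q Z Yi by (simp add: assoc_mult_mat_sq[of _ d])
    finally show ?thesis .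
  qed
  have "E * F = 1\<^sub>m N"
  proof (rule eq_matI)
    fix i j assume "i < dim_row (1\<^sub>m N)" "j < dim_col (1\<^sub>m N)"
    then have ij: "i < N" "j < N" by auto
    have "col F j = vec_of (Y (Suc j))"
      using ij by (auto simp: F_def vec_of_def)
    then have "(E * F) $$ (i, j) = vec_index (E *\<^sub>v vec_of (Y (Suc j))) i"
      using E F ij by simp
    also have "\<dots> = 1\<^sub>m N $$ (i, j)"
      using coeff[OF ij(1) Y[OF Suc_in[OF ij(2)]]] orth[OF Suc_in[OF ij(1)] Suc_in[OF ij(2)]] ij
      by simp
    finally show "(E * F) $$ (i, j) = 1\<^sub>m N $$ (i, j)" .
  qed (use E F in auto)
  then have "F * E = 1\<^sub>m N"
    by (rule mat_mult_left_right_inverse[OF E F])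
  then have vec_X: "vec_of X = F *\<^sub>v (E *\<^sub>v vec_of X)"
    using E F by (simp add: assoc_mult_mat_vec[symmetric, of F N N E N] vec_of_def)
  show ?thesis
  proof (rule eq_matI)
    fix a b assume "a < dim_row (msum d {1..d^2} (\<lambda>j. mtrace (adj (Y j) * P * X * Q) \<cdot>\<^sub>m Y j))"
      "b < dim_col (msum d {1..d^2} (\<lambda>j. mtrace (adj (Y j) * P * X * Q) \<cdot>\<^sub>m Y j))"
    then have ab: "a < d" "b < d" by auto
    define k where "k = a * d + b"
    have k: "k < N" "k div d = a" "k mod d = b"
      unfolding k_def N_def using mult_add_div_mod_less[OF ab] by auto
    have "X $$ (a, b) = vec_index (vec_of X) k"
      using k by (simp add: vec_of_def)
    also have "\<dots> = vec_index (F *\<^sub>v (E *\<^sub>v vec_of X)) k"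
      by (rule arg_cong[where f = "\<lambda>v. vec_index v k", OF vec_X])
    also have "\<dots> = (\<Sum>j<N. Y (Suc j) $$ (a, b) * vec_index (E *\<^sub>v vec_of X) j)"
      using k by (simp add: E_def F_def scalar_prod_def atLeast0LessThan)
    also have "\<dots> = (\<Sum>j<N. mtrace (adj (Y (Suc j)) * P * X * Q) * Y (Suc j) $$ (a, b))"
      by (intro sum.cong refl) (simp add: coeff[OF _ X])
    also have "\<dots> = (\<Sum>j\<in>{1..d^2}. mtrace (adj (Y j) * P * X * Q) * Y j $$ (a, b))"
      by (simp add: N_def power2_eq_square sum.atLeast1_atMost_eq)
    also have "\<dots> = msum d {1..d^2} (\<lambda>j. mtrace (adj (Y j) * P * X * Q) \<cdot>\<^sub>m Y j) $$ (a, b)"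
      using ab by (auto simp: carrier_matD[OF Y] intro!: sum.cong)
    finally show "X $$ (a, b) = msum d {1..d^2} (\<lambda>j. mtrace (adj (Y j) * P * X * Q) \<cdot>\<^sub>m Y j) $$ (a, b)" .
  qed (use X in auto)
qed

lemma mtrace_funpow_eigen_expansion:
  fixes Y :: "nat \<Rightarrow> complex mat" and lam :: "nat \<Rightarrow> complex"
  assumes P: "P \<in> carrier_mat d d" and Q: "Q \<in> carrier_mat d d"
    and Y: "\<And>i. i \<in> {1..d^2} \<Longrightarrow> Y i \<in> carrier_mat d d"
    and orth: "\<And>i j. i \<in> {1..d^2} \<Longrightarrow> j \<in> {1..d^2} \<Longrightarrow>
      mtrace (adj (Y i) * P * Y j * Q) = (if i = j then 1 else 0)"
    and E: "linear_mat_map d E" and eig: "\<And>j. j \<in> {1..d^2} \<Longrightarrow> E (Y j) = lam j \<cdot>\<^sub>m Y j"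
    and L: "linear_mat_map d L" and R: "R \<in> carrier_mat d d" and X: "X \<in> carrier_mat d d"
  shows "mtrace (R * L ((E ^^ m) X)) =
    (\<Sum>j\<in>{1..d^2}. mtrace (adj (Y j) * P * X * Q) * lam j ^ m * mtrace (R * L (Y j)))"
proof -
  let ?c = "\<lambda>j. mtrace (adj (Y j) * P * X * Q)"
  have "(E ^^ m) X = (E ^^ m) (msum d {1..d^2} (\<lambda>j. ?c j \<cdot>\<^sub>m Y j))"
    by (rule arg_cong[OF orthonormal_expansion[OF P Q Y orth X]])
  also have "\<dots> = msum d {1..d^2} (\<lambda>j. (?c j * lam j ^ m) \<cdot>\<^sub>m Y j)"
    by (rule linear_mat_map_funpow_eigen[OF E Y eig])
  finally have expansion: "L ((E ^^ m) X) = msum d {1..d^2} (\<lambda>j. (?c j * lam j ^ m) \<cdot>\<^sub>m L (Y j))"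
    by (simp only: linear_mat_map_msum_smult[OF L Y])
  show ?thesis
    unfolding expansion
    by (rule mtrace_mult_msum_smult[OF R]) (use Y in \<open>auto intro: linear_mat_map_carrier[OF L]\<close>)
qed

lemma mtrace_gibbs_funpow_eigen_expansion:
  fixes Y :: "nat \<Rightarrow> complex mat" and lam :: "nat \<Rightarrow> complex"
  assumes H: "H \<in> carrier_mat d d"
    and norm: "mtrace (gibbs_pow H \<beta> (1 - s) * gibbs_pow H \<beta> s) = 1"
    and Y: "\<And>i. i \<in> {1..d^2} \<Longrightarrow> Y i \<in> carrier_mat d d"
    and orth: "\<And>i j. i \<in> {1..d^2} \<Longrightarrow> j \<in> {1..d^2} \<Longrightarrow>
      s_inner H \<beta> s (Y i) (Y j) = (if i = j then 1 else 0)"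
    and E: "linear_mat_map d E" and eig: "\<And>j. j \<in> {1..d^2} \<Longrightarrow> E (Y j) = lam j \<cdot>\<^sub>m Y j"
    and L: "linear_mat_map d L" and X: "X \<in> carrier_mat d d"
  shows "mtrace (gibbs H \<beta> * L ((E ^^ m) X)) =
    (\<Sum>j\<in>{1..d^2}. s_inner H \<beta> s (Y j) X * s_inner H \<beta> s (1\<^sub>m d) (L (Y j)) * lam j ^ m)"
proof -
  have "mtrace (gibbs H \<beta> * L ((E ^^ m) X)) =
      (\<Sum>j\<in>{1..d^2}. s_inner H \<beta> s (Y j) X * lam j ^ m * mtrace (gibbs H \<beta> * L (Y j)))"
    unfolding s_inner_def
    by (rule mtrace_funpow_eigen_expansion[OF gibbs_pow_carrier[OF H] gibbs_pow_carrier[OF H] Y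
          orth[unfolded s_inner_def] E eig L gibbs_carrier[OF H] X])
  also have "\<dots> = (\<Sum>j\<in>{1..d^2}. s_inner H \<beta> s (Y j) X * s_inner H \<beta> s (1\<^sub>m d) (L (Y j)) * lam j ^ m)"
    using Y by (intro sum.cong refl) (simp add: s_inner_one_left[OF H norm] linear_mat_map_carrier[OF L] mult_ac)
  finally show ?thesis .
qed

theorem lemma5p9:
  fixes n :: nat and H :: "complex mat" and \<beta> s :: real
    and U :: "real set" and Ob :: "real \<Rightarrow> complex mat"
    and IN :: "'k set" and KN :: "'k \<Rightarrow> complex mat"
    and Y :: "nat \<Rightarrow> complex mat" and lam :: "nat \<Rightarrow> real"
    and K t p :: nat
  defines "d \<equiv> 2 ^ n"
    and "\<rho> \<equiv> gibbs H \<beta>"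
    and "v \<equiv> meas_expect U Ob (gibbs H \<beta>)"
    and "Eadj \<equiv> (\<lambda>X. kraus_adj (2 ^ n) U Ob (kraus_adj (2 ^ n) IN KN (kraus_adj (2 ^ n) U Ob X)))"
    and "Ehatadj \<equiv> (\<lambda>X. hat_meas_adj (2 ^ n) U Ob (meas_expect U Ob (gibbs H \<beta>))
                           (kraus_adj (2 ^ n) IN KN (kraus_adj (2 ^ n) U Ob X)))"
  assumes H: "H \<in> carrier_mat d d" "adj H = H"
    and beta: "\<beta> > 0"
    and chN: "is_channel d IN KN"
    and chM: "is_channel d U Ob"
    and dbN: "s_detailed_balance d H \<beta> s (kraus_adj d IN KN)"
    and dbM: "s_detailed_balance d H \<beta> s (kraus_adj d U Ob)"
    and fixN: "unique_fixed_state d (kraus_map d IN KN) \<rho>"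
    and specN: "spectrum_in_01 d (kraus_map d IN KN)"
    and Ycar: "\<And>i. i \<in> {1..d^2} \<Longrightarrow> Y i \<in> carrier_mat d d"
    and Yon: "\<And>i j. i \<in> {1..d^2} \<Longrightarrow> j \<in> {1..d^2} \<Longrightarrow>
                 s_inner H \<beta> s (Y i) (Y j) = (if i = j then 1 else 0)"
    and Yeig: "\<And>i. i \<in> {1..d^2} \<Longrightarrow> Eadj (Y i) = complex_of_real (lam i) \<cdot>\<^sub>m Y i"
    and lam1: "lam 1 = 1" and Y1: "Y 1 = 1\<^sub>m d"
    and lam2: "\<And>i. i \<in> {2..d^2} \<Longrightarrow> lam i < 1"
    and lammono: "\<And>i j. 2 \<le> i \<Longrightarrow> i \<le> j \<Longrightarrow> j \<le> d^2 \<Longrightarrow> lam j \<le> lam i"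
    and lampos: "\<And>i. i \<in> {1..d^2} \<Longrightarrow> 0 \<le> lam i"
    and tp: "t > 0" "p > 0" "t + p \<le> K"
  shows "traj_expect d U Ob IN KN \<rho> 0 K
           (\<lambda>e. (complex_of_real (e t) - v) * (complex_of_real (e (t + p)) - v))
         = (\<Sum>j\<in>{2..d^2}. s_inner H \<beta> s (Y j) (Ehatadj (Y 1)) * s_inner H \<beta> s (Y 1) (Ehatadj (Y j))
                          * complex_of_real (lam j ^ (p - 1)))"
proof -
  have Ob: "\<And>u. u \<in> U \<Longrightarrow> Ob u \<in> carrier_mat d d" and KN: "\<And>k. k \<in> IN \<Longrightarrow> KN k \<in> carrier_mat d d"
    using chM chN unfolding is_channel_def by auto
  have one: "1 \<in> {1..d^2}"
    by (simp add: d_def)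
  have norm: "mtrace (gibbs_pow H \<beta> (1 - s) * gibbs_pow H \<beta> s) = 1"
    using Yon[OF one one, unfolded Y1] H(1)
    by (simp add: s_inner_def gibbs_pow_carrier left_mult_one_mat[of _ d d] right_mult_one_mat[of _ d d])
  have E: "Eadj = round_adj d U Ob IN KN (\<lambda>_. 1)"
    and Eh: "Ehatadj = round_adj d U Ob IN KN (\<lambda>u. complex_of_real u - v)"
    by (simp_all add: Eadj_def Ehatadj_def d_def v_def round_adj_one_weight round_adj_centered_weight)
  have linear: "linear_mat_map d (round_adj d U Ob IN KN w)" for w
    by (rule linear_mat_map_round_adj[OF Ob KN])
  have "traj_expect d U Ob IN KN \<rho> 0 K
      (\<lambda>e. (complex_of_real (e t) - v) * (complex_of_real (e (t + p)) - v)) =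
    mtrace (\<rho> * Ehatadj ((Eadj ^^ (p - 1)) (Ehatadj (1\<^sub>m d))))"
    unfolding E Eh \<rho>_def using H(1) norm chM chN dbM dbN tp
    by (intro traj_expect_two_point[OF Ob KN gibbs_carrier] round_adj_one_weight_one_mat
        mtrace_gibbs_round_adj_one_weight)
  also have "\<dots> = (\<Sum>j\<in>{1..d^2}. s_inner H \<beta> s (Y j) (Ehatadj (Y 1)) * s_inner H \<beta> s (Y 1) (Ehatadj (Y j))
                     * complex_of_real (lam j ^ (p - 1)))"
    unfolding Y1 \<rho>_def of_real_power
    by (rule mtrace_gibbs_funpow_eigen_expansion[OF H(1) norm Ycar Yon linear[of "\<lambda>_. 1", folded E] Yeig
          linear[of "\<lambda>u. complex_of_real u - v", folded Eh]])
      (simp_all add: Eh)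
  also have "\<dots> = (\<Sum>j\<in>{2..d^2}. s_inner H \<beta> s (Y j) (Ehatadj (Y 1)) * s_inner H \<beta> s (Y 1) (Ehatadj (Y j))
                     * complex_of_real (lam j ^ (p - 1)))"
  proof -
    have "s_inner H \<beta> s (Y 1) (Ehatadj (Y 1)) = 0"
      unfolding Y1 Eh v_def by (rule s_inner_one_round_adj_centered_one[OF H(1) norm chM chN])
    then show ?thesis
      using one by (simp add: sum.atLeast_Suc_atMost numeral_2_eq_2)
  qed
  finally show ?thesis .
qed

end
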